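(* Let $p\ge1$ be an integer. For every $\bm U^0\in\mathbb V_h$ the equation $(\bm I+\mathbb A^2)\frac{\bm U^1-\bm U^0}{\tau}+\mathbb D(\bm U^0)\frac{\bm U^1+\bm U^0}{2}=0$ has a unique solution $\bm U^1\in\mathbb V_h$, and for every $n\ge1$ and all given $\bm U^{n-1},\bm U^n\in\mathbb V_h$ the equation $(\bm I+\mathbb A^2)\frac{\bm U^{n+1}-\bm U^n}{\tau}+\mathbb D\big(\frac{3\bm U^n-\bm U^{n-1}}{2}\big)\frac{\bm U^{n+1}+\bm U^n}{2}=0$ has a unique solution $\bm U^{n+1}\in\mathbb V_h$. That is, the LCN-MP scheme is uniquely solvable.
   Context: $\Omega=[x_L,x_R]\times[y_L,y_R]$, $l_1=x_R-x_L$, $l_2=y_R-y_L$, $N_1,N_2$ even, $h_r=l_r/N_r$, grid points $x_{j_1}=x_L+j_1h_1$, $y_{j_2}=y_L+j_2h_2$, $0\le j_r\le N_r-1$; $\tau>0$. $\mathbb V_h$ is the space of doubly periodic grid functions identified with vectors $\bm U=(U_{0,0},U_{1,0},\dots,U_{N_1-1,0},U_{0,1},\dots,U_{N_1-1,N_2-1})^T$. For $r=1,2$, $\mu_r=2\pi/l_r$, $g^{(1)}_k(x)=\frac1{N_1}\sum_{l=-N_1/2}^{N_1/2}\frac1{a_l}e^{\mathrm il\mu_1(x-x_k)}$, $a_l=1$ for $|l|<N_1/2$, $a_{\pm N_1/2}=2$ (similarly $g^{(2)}_k(y)$). $\bm D_s^x=(\frac{d^s}{dx^s}g^{(1)}_k(x_j))_{j,k=0}^{N_1-1}$,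 $\bm D_s^y=(\frac{d^s}{dy^s}g^{(2)}_k(y_j))_{j,k=0}^{N_2-1}$. $\mathbb A=\bm I_{N_2}\otimes\bm D_2^x+\bm D_2^y\otimes\bm I_{N_1}$, $\mathbb B=\bm I_{N_2}\otimes\bm D_3^x+\bm D_2^y\otimes\bm D_1^x$, $\mathbb L_h=\bm I_{N_2}\otimes\bm D_1^x+\bm D_1^y\otimes\bm I_{N_1}$ ($\otimes$ Kronecker product), $\mathbb D(\bm W)=\mathbb B+\mathbb L_h+\frac1{p+2}(\mathrm{diag}(\bm W^p)\mathbb L_h+\mathbb L_h\mathrm{diag}(\bm W^p))$ with $\bm W^p$ the componentwise power. *)

theory Defs
  imports "HOL-Analysis.Analysis"
begin

text \<open>Grid functions on an N1 x N2 periodic grid are vectors of length N = N1*N2, represented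
  as functions nat => real vanishing at indices >= N; U_{j1,j2} is stored at index j1 + N1*j2.
  Square matrices are functions nat => nat => real (only indices < size are meaningful).\<close>

definition Vh :: "nat \<Rightarrow> (nat \<Rightarrow> real) set" where
  "Vh N = {U. \<forall>i\<ge>N. U i = 0}"

definition a_coef :: "nat \<Rightarrow> int \<Rightarrow> real" where
  "a_coef N l = (if \<bar>l\<bar> = int N div 2 then 2 else 1)"

text \<open>Trigonometric interpolation basis g_k(x) on an interval of length len with N points,
  centred at node xk (it is real-valued; we take the real part of the defining complex sum).\<close>
definition trig_basis :: "real \<Rightarrow> nat \<Rightarrow> real \<Rightarrow> real \<Rightarrow> real" where
  "trig_basis len N xk x = Re ((1 / of_nat N) *
     (\<Sum>l\<in>{- (int N div 2) .. int N div 2}.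
        (1 / complex_of_real (a_coef N l)) *
        exp (\<i> * of_int l * complex_of_real (2 * pi / len) * complex_of_real (x - xk))))"

definition diff_mat :: "nat \<Rightarrow> real \<Rightarrow> real \<Rightarrow> nat \<Rightarrow> nat \<Rightarrow> nat \<Rightarrow> real" where
  "diff_mat s L R N j k =
     (let node = (\<lambda>m. L + real m * ((R - L) / real N))
      in (deriv ^^ s) (trig_basis (R - L) N (node k)) (node j))"

definition idm :: "nat \<Rightarrow> nat \<Rightarrow> real" where
  "idm i j = (if i = j then 1 else 0)"

definition kron :: "nat \<Rightarrow> (nat \<Rightarrow> nat \<Rightarrow> real) \<Rightarrow> (nat \<Rightarrow> nat \<Rightarrow> real) \<Rightarrow> nat \<Rightarrow> nat \<Rightarrow> real" where
  "kron n A B i j = A (i div n) (j div n) * B (i mod n) (j mod n)"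

definition matmul :: "nat \<Rightarrow> (nat \<Rightarrow> nat \<Rightarrow> real) \<Rightarrow> (nat \<Rightarrow> nat \<Rightarrow> real) \<Rightarrow> nat \<Rightarrow> nat \<Rightarrow> real" where
  "matmul n A B i j = (\<Sum>k<n. A i k * B k j)"

definition matvec :: "nat \<Rightarrow> (nat \<Rightarrow> nat \<Rightarrow> real) \<Rightarrow> (nat \<Rightarrow> real) \<Rightarrow> nat \<Rightarrow> real" where
  "matvec n A v i = (\<Sum>k<n. A i k * v k)"

definition diagm :: "(nat \<Rightarrow> real) \<Rightarrow> nat \<Rightarrow> nat \<Rightarrow> real" where
  "diagm w i j = (if i = j then w i else 0)"

definition Amat :: "real \<Rightarrow> real \<Rightarrow> real \<Rightarrow> real \<Rightarrow> nat \<Rightarrow> nat \<Rightarrow> nat \<Rightarrow> nat \<Rightarrow> real" where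
  "Amat xL xR yL yR N1 N2 i j =
     kron N1 idm (diff_mat 2 xL xR N1) i j + kron N1 (diff_mat 2 yL yR N2) idm i j"

definition Bmat :: "real \<Rightarrow> real \<Rightarrow> real \<Rightarrow> real \<Rightarrow> nat \<Rightarrow> nat \<Rightarrow> nat \<Rightarrow> nat \<Rightarrow> real" where
  "Bmat xL xR yL yR N1 N2 i j =
     kron N1 idm (diff_mat 3 xL xR N1) i j
     + kron N1 (diff_mat 2 yL yR N2) (diff_mat 1 xL xR N1) i j"

definition Lmat :: "real \<Rightarrow> real \<Rightarrow> real \<Rightarrow> real \<Rightarrow> nat \<Rightarrow> nat \<Rightarrow> nat \<Rightarrow> nat \<Rightarrow> real" where
  "Lmat xL xR yL yR N1 N2 i j =
     kron N1 idm (diff_mat 1 xL xR N1) i j + kron N1 (diff_mat 1 yL yR N2) idm i j"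

definition Dmat :: "nat \<Rightarrow> real \<Rightarrow> real \<Rightarrow> real \<Rightarrow> real \<Rightarrow> nat \<Rightarrow> nat \<Rightarrow> (nat \<Rightarrow> real) \<Rightarrow> nat \<Rightarrow> nat \<Rightarrow> real" where
  "Dmat p xL xR yL yR N1 N2 W i j =
     (let N = N1 * N2; L = Lmat xL xR yL yR N1 N2; Wp = (\<lambda>k. W k ^ p) in
      Bmat xL xR yL yR N1 N2 i j + L i j
      + (1 / (real p + 2)) * (matmul N (diagm Wp) L i j + matmul N L (diagm Wp) i j))"

definition IA2 :: "real \<Rightarrow> real \<Rightarrow> real \<Rightarrow> real \<Rightarrow> nat \<Rightarrow> nat \<Rightarrow> nat \<Rightarrow> nat \<Rightarrow> real" where
  "IA2 xL xR yL yR N1 N2 i j =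
     idm i j + matmul (N1 * N2) (Amat xL xR yL yR N1 N2) (Amat xL xR yL yR N1 N2) i j"

definition scheme_eq :: "nat \<Rightarrow> real \<Rightarrow> real \<Rightarrow> real \<Rightarrow> real \<Rightarrow> nat \<Rightarrow> nat \<Rightarrow> real \<Rightarrow>
    (nat \<Rightarrow> real) \<Rightarrow> (nat \<Rightarrow> real) \<Rightarrow> (nat \<Rightarrow> real) \<Rightarrow> bool" where
  "scheme_eq p xL xR yL yR N1 N2 \<tau> W U V =
     (\<forall>i < N1 * N2.
        matvec (N1 * N2) (IA2 xL xR yL yR N1 N2) (\<lambda>k. (V k - U k) / \<tau>) i
        + matvec (N1 * N2) (Dmat p xL xR yL yR N1 N2 W) (\<lambda>k. (V k + U k) / 2) i = 0)"

end

theory Submission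
  imports Defs Jordan_Normal_Form.Determinant
begin

text \<open>Each step of the scheme is the square linear system
  \<open>((I + A\<^sup>2)/\<tau> + D(W)/2) U\<^sup>n\<^sup>+\<^sup>1 = ((I + A\<^sup>2)/\<tau> - D(W)/2) U\<^sup>n\<close>.
  The Fourier differentiation matrix \<open>D\<^sub>s\<close> has entries depending only on the node difference
  \<open>x\<^sub>j - x\<^sub>k\<close> through the \<open>s\<close>-th derivative of an even function, so it is symmetric for even
  and skew-symmetric for odd \<open>s\<close>. Hence \<open>A\<close> is symmetric, while \<open>B\<close>, \<open>L\<^sub>h\<close> and the
  symmetrised products \<open>diag(W\<^sup>p) L\<^sub>h + L\<^sub>h diag(W\<^sup>p)\<close> are skew-symmetric, whatever \<open>W\<close> is.
  The quadratic form of the system matrix is therefore \<open>(|v|\<^sup>2 + |A v|\<^sup>2)/\<tau> \<ge> |v|\<^sup>2/\<tau>\<close>,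
  so its kernel is trivial and the system has exactly one solution.\<close>

lemma trig_basis_eq_cos_sum:
  "trig_basis len N xk x = (\<Sum>l\<in>{- (int N div 2) .. int N div 2}.
      (1 / (real N * a_coef N l)) * cos (real_of_int l * (2 * pi / len) * (x - xk)))"
proof -
  have term_Re: "Re ((1 / complex_of_real (a_coef N l)) *
        exp (\<i> * of_int l * complex_of_real (2 * pi / len) * complex_of_real (x - xk)))
       = (1 / a_coef N l) * cos (real_of_int l * (2 * pi / len) * (x - xk))" for l
  proof -
    have "\<i> * of_int l * complex_of_real (2 * pi / len) * complex_of_real (x - xk)
        = \<i> * complex_of_real (real_of_int l * (2 * pi / len) * (x - xk))" by simp
    then show ?thesis by (simp add: Re_exp Im_exp)
  qed
  have scale: "(1 / of_nat N :: complex) = complex_of_real (1 / real N)"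
    and Re_scale: "Re (complex_of_real r * z) = r * Re z" for r z
    by simp_all
  have "trig_basis len N xk x = (1 / real N) * (\<Sum>l\<in>{- (int N div 2) .. int N div 2}.
      (1 / a_coef N l) * cos (real_of_int l * (2 * pi / len) * (x - xk)))"
    unfolding trig_basis_def scale Re_scale by (simp only: Re_sum term_Re)
  then show ?thesis by (simp add: sum_distrib_left)
qed

lemma higher_deriv_cos_sum:
  fixes c w :: "int \<Rightarrow> real" and S :: "int set"
  shows "(deriv ^^ s) (\<lambda>x. \<Sum>l\<in>S. c l * cos (w l * (x - xk)))
       = (\<lambda>x. \<Sum>l\<in>S. c l * w l ^ s * cos (w l * (x - xk) + real s * pi / 2))"
proof (induction s)
  case 0
  then show ?case by simp
next
  case (Suc s)
  have "((\<lambda>x. \<Sum>l\<in>S. c l * w l ^ s * cos (w l * (x - xk) + real s * pi / 2)) has_field_derivative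
        (\<Sum>l\<in>S. c l * w l ^ Suc s * cos (w l * (x - xk) + real (Suc s) * pi / 2))) (at x)" for x
  proof (rule DERIV_sum)
    fix l
    have shift: "w l * (x - xk) + real (Suc s) * pi / 2 = (w l * (x - xk) + real s * pi / 2) + pi / 2"
      by (simp add: algebra_simps add_divide_distrib)
    have "((\<lambda>x. c l * w l ^ s * cos (w l * (x - xk) + real s * pi / 2)) has_field_derivative
        c l * w l ^ s * (- sin (w l * (x - xk) + real s * pi / 2) * (w l * 1))) (at x)"
      by (intro derivative_eq_intros) auto
    then show "((\<lambda>x. c l * w l ^ s * cos (w l * (x - xk) + real s * pi / 2)) has_field_derivative
        c l * w l ^ Suc s * cos (w l * (x - xk) + real (Suc s) * pi / 2)) (at x)"
      by (simp only: shift cos_add cos_pi_half sin_pi_half) (simp add: algebra_simps)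
  qed
  then show ?case
    by (simp only: funpow.simps comp_def Suc) (rule ext, rule DERIV_imp_deriv)
qed

lemma cos_minus_add_half_pi_mult:
  "cos (- t + real s * pi / 2) = (-1) ^ s * cos (t + real s * pi / 2)"
proof -
  have "- t + real s * pi / 2 = - ((t + real s * pi / 2) - real s * pi)" by (simp add: field_simps)
  then have "cos (- t + real s * pi / 2) = cos ((t + real s * pi / 2) - real s * pi)"
    by (simp only: cos_minus)
  also have "\<dots> = (-1) ^ s * cos (t + real s * pi / 2)"
    by (simp only: cos_diff sin_npi cos_npi) simp
  finally show ?thesis .
qed

lemma diff_mat_transpose: "diff_mat s L R N j k = (-1) ^ s * diff_mat s L R N k j"
proof -
  define c where "c = (\<lambda>l. 1 / (real N * a_coef N l))"
  define w where "w = (\<lambda>l. real_of_int l * (2 * pi / (R - L)))"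
  define S where "S = {- (int N div 2) .. int N div 2}"
  define node where "node = (\<lambda>m. L + real m * ((R - L) / real N))"
  have basis: "trig_basis (R - L) N y = (\<lambda>x. \<Sum>l\<in>S. c l * cos (w l * (x - y)))" for y
    by (rule ext) (simp add: trig_basis_eq_cos_sum c_def w_def S_def)
  have entry: "diff_mat s L R N a b
      = (\<Sum>l\<in>S. c l * w l ^ s * cos (w l * (node a - node b) + real s * pi / 2))" for a b
    unfolding diff_mat_def Let_def node_def[symmetric] basis higher_deriv_cos_sum by simp
  have "diff_mat s L R N j k
      = (\<Sum>l\<in>S. c l * w l ^ s * cos (- (w l * (node k - node j)) + real s * pi / 2))"
    unfolding entry by (intro sum.cong) (simp_all add: algebra_simps)
  also have "\<dots> = (-1) ^ s * diff_mat s L R N k j"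
    unfolding entry cos_minus_add_half_pi_mult by (simp add: sum_distrib_left algebra_simps)
  finally show ?thesis .
qed

lemma kron_transpose:
  assumes "\<And>i j. A i j = a * A j i" and "\<And>i j. B i j = b * B j i"
  shows "kron n A B i j = (a * b) * kron n A B j i"
  unfolding kron_def using assms by (metis mult.assoc mult.left_commute)

lemma idm_transpose: "idm i j = 1 * idm j i"
  by (simp add: idm_def)

lemma Amat_symmetric: "Amat xL xR yL yR N1 N2 i j = Amat xL xR yL yR N1 N2 j i"
  unfolding Amat_def
  using kron_transpose[where n=N1 and i=i and j=j, OF idm_transpose diff_mat_transpose[of 2]]
        kron_transpose[where n=N1 and i=i and j=j, OF diff_mat_transpose[of 2] idm_transpose]
  by simp

lemma Bmat_skew: "Bmat xL xR yL yR N1 N2 i j = - Bmat xL xR yL yR N1 N2 j i"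
  unfolding Bmat_def
  using kron_transpose[where n=N1 and i=i and j=j, OF idm_transpose diff_mat_transpose[of 3]]
        kron_transpose[where n=N1 and i=i and j=j, OF diff_mat_transpose[of 2] diff_mat_transpose[of 1]]
  by simp

lemma Lmat_skew: "Lmat xL xR yL yR N1 N2 i j = - Lmat xL xR yL yR N1 N2 j i"
  unfolding Lmat_def
  using kron_transpose[where n=N1 and i=i and j=j, OF idm_transpose diff_mat_transpose[of 1]]
        kron_transpose[where n=N1 and i=i and j=j, OF diff_mat_transpose[of 1] idm_transpose]
  by simp

lemma matmul_diagm_left: "i < n \<Longrightarrow> matmul n (diagm w) M i j = w i * M i j"
  unfolding matmul_def diagm_def by (simp add: if_distrib[where f="\<lambda>x. x * _"] cong: if_cong)

lemma matmul_diagm_right: "j < n \<Longrightarrow> matmul n M (diagm w) i j = M i j * w j"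
  unfolding matmul_def diagm_def by (simp add: if_distrib[where f="\<lambda>x. _ * x"] cong: if_cong)

lemma Dmat_skew:
  assumes "i < N1 * N2" and "j < N1 * N2"
  shows "Dmat p xL xR yL yR N1 N2 W i j = - Dmat p xL xR yL yR N1 N2 W j i"
  unfolding Dmat_def Let_def
  using assms Bmat_skew[of xL xR yL yR N1 N2 i j] Lmat_skew[of xL xR yL yR N1 N2 i j]
  by (simp add: matmul_diagm_left matmul_diagm_right algebra_simps)

definition quad_form :: "nat \<Rightarrow> (nat \<Rightarrow> nat \<Rightarrow> real) \<Rightarrow> (nat \<Rightarrow> real) \<Rightarrow> real" where
  "quad_form n M v = (\<Sum>i<n. v i * matvec n M v i)"

lemma matvec_lincomb_mat:
  "matvec n (\<lambda>i k. a * P i k + b * Q i k) v i = a * matvec n P v i + b * matvec n Q v i"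
  unfolding matvec_def by (simp add: distrib_right sum.distrib sum_distrib_left mult.assoc)

lemma matvec_lincomb_vec:
  "matvec n M (\<lambda>k. a * v k + b * w k) i = a * matvec n M v i + b * matvec n M w i"
  unfolding matvec_def by (simp add: distrib_left sum.distrib sum_distrib_left mult.left_commute)

lemma matvec_idm: "i < n \<Longrightarrow> matvec n idm v i = v i"
  unfolding matvec_def idm_def by (simp add: if_distrib[where f="\<lambda>x. x * _"] cong: if_cong)

lemma quad_form_lincomb_mat:
  "quad_form n (\<lambda>i k. a * P i k + b * Q i k) v = a * quad_form n P v + b * quad_form n Q v"
  unfolding quad_form_def matvec_lincomb_mat
  by (simp add: sum.distrib sum_distrib_left algebra_simps)

lemma quad_form_idm: "quad_form n idm v = (\<Sum>i<n. v i ^ 2)"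
  unfolding quad_form_def by (simp add: matvec_idm power2_eq_square)

lemma quad_form_skew:
  assumes "\<And>i j. i < n \<Longrightarrow> j < n \<Longrightarrow> M i j = - M j i"
  shows "quad_form n M v = 0"
proof -
  let ?S = "\<Sum>i<n. \<Sum>k<n. v i * M i k * v k"
  have quad_form_eq: "quad_form n M v = ?S"
    unfolding quad_form_def matvec_def by (simp only: sum_distrib_left mult.assoc)
  have "?S = (\<Sum>k<n. \<Sum>i<n. v i * M i k * v k)" by (rule sum.swap)
  also have "\<dots> = (\<Sum>k<n. \<Sum>i<n. - (v k * M k i * v i))"
  proof (intro sum.cong refl)
    fix k i assume "k \<in> {..<n}" "i \<in> {..<n}"
    then have "M i k = - M k i" using assms[of i k] by simp
    then show "v i * M i k * v k = - (v k * M k i * v i)" by simp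
  qed
  also have "\<dots> = - ?S" by (simp only: sum_negf)
  finally show ?thesis using quad_form_eq by linarith
qed

lemma quad_form_square_nonneg:
  assumes "\<And>i j. A i j = A j i"
  shows "quad_form n (matmul n A A) v \<ge> 0"
proof -
  have "quad_form n (matmul n A A) v = (\<Sum>i<n. \<Sum>k<n. \<Sum>m<n. v i * A i m * A m k * v k)"
    unfolding quad_form_def matvec_def matmul_def
    by (simp only: sum_distrib_left sum_distrib_right mult.assoc[symmetric])
  also have "\<dots> = (\<Sum>i<n. \<Sum>m<n. \<Sum>k<n. v i * A i m * A m k * v k)"
    by (intro sum.cong refl sum.swap)
  also have "\<dots> = (\<Sum>m<n. \<Sum>i<n. \<Sum>k<n. v i * A i m * A m k * v k)"
    by (rule sum.swap)
  also have "\<dots> = (\<Sum>m<n. (\<Sum>i<n. A m i * v i) * (\<Sum>k<n. A m k * v k))"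
    unfolding sum_product
  proof (intro sum.cong refl)
    fix m i k
    show "v i * A i m * A m k * v k = A m i * v i * (A m k * v k)"
      using assms[of i m] by (simp only: mult.commute mult.left_commute)
  qed
  also have "\<dots> = (\<Sum>m<n. (\<Sum>i<n. A m i * v i)\<^sup>2)"
    by (simp only: power2_eq_square)
  also have "\<dots> \<ge> 0" by (intro sum_nonneg zero_le_power2)
  finally show ?thesis .
qed

lemma quad_form_IA2_ge: "quad_form (N1 * N2) (IA2 xL xR yL yR N1 N2) v \<ge> (\<Sum>i<N1 * N2. v i ^ 2)"
proof -
  let ?A = "Amat xL xR yL yR N1 N2"
  have IA2: "IA2 xL xR yL yR N1 N2 = (\<lambda>i k. 1 * idm i k + 1 * matmul (N1 * N2) ?A ?A i k)"
    by (simp add: IA2_def fun_eq_iff)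
  show ?thesis
    unfolding IA2 quad_form_lincomb_mat quad_form_idm
    using quad_form_square_nonneg[where A="?A", OF Amat_symmetric] by simp
qed

lemma matvec_solvable_if_kernel_trivial:
  fixes M :: "nat \<Rightarrow> nat \<Rightarrow> real"
  assumes kernel: "\<And>v. \<forall>i<n. matvec n M v i = 0 \<Longrightarrow> \<forall>i<n. v i = 0"
  shows "\<exists>V\<in>Vh n. \<forall>i<n. matvec n M V i = b i"
proof -
  define A where "A = Matrix.mat n n (\<lambda>(i, j). M i j)"
  define zero_ext where "zero_ext = (\<lambda>v :: real vec. \<lambda>k. if k < n then v $ k else 0)"
  have A: "A \<in> carrier_mat n n" unfolding A_def by simp
  have mult_A: "(A *\<^sub>v v) $ i = matvec n M (zero_ext v) i" if "i < n" "v \<in> carrier_vec n" for v i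
    using that unfolding A_def zero_ext_def matvec_def
    by (auto simp: mult_mat_vec_def scalar_prod_def row_def intro!: sum.cong)
  have "Determinant.det A \<noteq> 0"
  proof
    assume "Determinant.det A = 0"
    then obtain v where v: "v \<in> carrier_vec n" "v \<noteq> 0\<^sub>v n" "A *\<^sub>v v = 0\<^sub>v n"
      using det_0_iff_vec_prod_zero[OF A] by auto
    then have "\<forall>i<n. matvec n M (zero_ext v) i = 0"
      using mult_A by (metis index_zero_vec(1))
    then have "\<forall>i<n. zero_ext v i = 0" by (rule kernel)
    then have "v = 0\<^sub>v n" using v(1) unfolding zero_ext_def by (intro eq_vecI) auto
    with v(2) show False by simp
  qed
  then have "A \<in> Units (ring_mat TYPE(real) n undefined)"
    by (rule det_non_zero_imp_unit[OF A])
  then obtain B where B: "B \<in> carrier_mat n n" and AB: "A * B = 1\<^sub>m n"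
    unfolding Units_def ring_mat_def by auto
  define w where "w = B *\<^sub>v Matrix.vec n b"
  have w: "w \<in> carrier_vec n" unfolding w_def using B by simp
  have "A *\<^sub>v w = Matrix.vec n b"
    unfolding w_def using A B AB by (simp add: assoc_mult_mat_vec[symmetric])
  then have "\<forall>i<n. matvec n M (zero_ext w) i = b i"
    using mult_A[OF _ w] by simp
  moreover have "zero_ext w \<in> Vh n" unfolding Vh_def zero_ext_def by auto
  ultimately show ?thesis by blast
qed

lemma matvec_unique_solvable_if_kernel_trivial:
  fixes M :: "nat \<Rightarrow> nat \<Rightarrow> real"
  assumes kernel: "\<And>v. \<forall>i<n. matvec n M v i = 0 \<Longrightarrow> \<forall>i<n. v i = 0"
  shows "\<exists>!V\<in>Vh n. \<forall>i<n. matvec n M V i = b i"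
proof -
  obtain V where V: "V \<in> Vh n" "\<forall>i<n. matvec n M V i = b i"
    using matvec_solvable_if_kernel_trivial[OF kernel] by blast
  have "V' = V" if V': "V' \<in> Vh n" "\<forall>i<n. matvec n M V' i = b i" for V'
  proof
    have "matvec n M (\<lambda>k. V' k - V k) i = matvec n M V' i - matvec n M V i" for i
      using matvec_lincomb_vec[of n M 1 V' "-1" V i] by simp
    then have "\<forall>i<n. matvec n M (\<lambda>k. V' k - V k) i = 0"
      using V(2) V'(2) by simp
    then have "\<forall>i<n. V' i = V i" using kernel by fastforce
    then show "V' k = V k" for k using V(1) V'(1) unfolding Vh_def by (cases "k < n") auto
  qed
  with V show ?thesis by blast
qed

lemma kernel_trivial_if_coercive:
  assumes "c > 0" and "quad_form n M v \<ge> c * (\<Sum>i<n. v i ^ 2)"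
    and "\<forall>i<n. matvec n M v i = 0"
  shows "\<forall>i<n. v i = 0"
proof -
  have "quad_form n M v = 0" using assms(3) unfolding quad_form_def by simp
  with assms(1,2) have "(\<Sum>i<n. v i ^ 2) \<le> 0" by (simp add: mult_le_0_iff)
  then have "(\<Sum>i<n. v i ^ 2) = 0" by (simp add: antisym sum_nonneg)
  then show ?thesis by (simp add: sum_nonneg_eq_0_iff)
qed

lemma crank_nicolson_unique_solvable:
  fixes P D :: "nat \<Rightarrow> nat \<Rightarrow> real"
  assumes "\<tau> > 0"
    and P_coercive: "\<And>v. quad_form n P v \<ge> (\<Sum>i<n. v i ^ 2)"
    and D_skew: "\<And>i j. i < n \<Longrightarrow> j < n \<Longrightarrow> D i j = - D j i"
  shows "\<exists>!V\<in>Vh n. \<forall>i<n.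
           matvec n P (\<lambda>k. (V k - U k) / \<tau>) i + matvec n D (\<lambda>k. (V k + U k) / 2) i = 0"
proof -
  define M where "M = (\<lambda>i k. (1 / \<tau>) * P i k + (1 / 2) * D i k)"
  define b where "b = (\<lambda>i. matvec n P U i / \<tau> - matvec n D U i / 2)"
  have residual: "matvec n P (\<lambda>k. (V k - U k) / \<tau>) i + matvec n D (\<lambda>k. (V k + U k) / 2) i
      = matvec n M V i - b i" for V i
  proof -
    have diff: "(\<lambda>k. (V k - U k) / \<tau>) = (\<lambda>k. (1 / \<tau>) * V k + (- 1 / \<tau>) * U k)"
      and sum: "(\<lambda>k. (V k + U k) / 2) = (\<lambda>k. (1 / 2) * V k + (1 / 2) * U k)"
      by (simp_all add: fun_eq_iff diff_divide_distrib add_divide_distrib)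
    show ?thesis
      unfolding diff sum M_def b_def matvec_lincomb_mat matvec_lincomb_vec by simp
  qed
  have coercive: "quad_form n M v \<ge> (1 / \<tau>) * (\<Sum>i<n. v i ^ 2)" for v
    using P_coercive[of v] quad_form_skew[where M=D, OF D_skew] \<open>\<tau> > 0\<close>
    unfolding M_def quad_form_lincomb_mat by (simp add: divide_right_mono)
  have "\<forall>i<n. v i = 0" if "\<forall>i<n. matvec n M v i = 0" for v
    using kernel_trivial_if_coercive[OF _ coercive that] \<open>\<tau> > 0\<close> by simp
  then have "\<exists>!V\<in>Vh n. \<forall>i<n. matvec n M V i = b i"
    by (rule matvec_unique_solvable_if_kernel_trivial)
  then show ?thesis by (simp add: residual)
qed

theorem theorem3p2:
  fixes p N1 N2 :: nat and xL xR yL yR \<tau> :: real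
  assumes "p \<ge> 1" and "xL < xR" and "yL < yR"
    and "even N1" and "even N2" and "N1 > 0" and "N2 > 0" and "\<tau> > 0"
  shows "(\<forall>U0\<in>Vh (N1 * N2). \<exists>!U1\<in>Vh (N1 * N2).
            scheme_eq p xL xR yL yR N1 N2 \<tau> U0 U0 U1)
       \<and> (\<forall>n::nat \<ge> 1. \<forall>Uold\<in>Vh (N1 * N2). \<forall>Ucur\<in>Vh (N1 * N2). \<exists>!Unext\<in>Vh (N1 * N2).
            scheme_eq p xL xR yL yR N1 N2 \<tau> (\<lambda>k. (3 * Ucur k - Uold k) / 2) Ucur Unext)"
proof -
  have "\<exists>!V\<in>Vh (N1 * N2). scheme_eq p xL xR yL yR N1 N2 \<tau> W U V" for W U
    unfolding scheme_eq_def
    using crank_nicolson_unique_solvable[OF \<open>\<tau> > 0\<close> quad_form_IA2_ge Dmat_skew] .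
  then show ?thesis by blast
qed

end
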